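(* Let $X,Y$ be real-valued random variables on an atomless probability space. Then: (i) if $\mathbb E[Y_+]=\infty$, then $X\le_{\rm cx}Y$ is equivalent to $X\le_{\rm dcx}Y$; (ii) if $\mathbb E[Y_-]=\infty$, then $X\le_{\rm cx}Y$ is equivalent to $X\le_{\rm icx}Y$; (iii) if $\mathbb E[Y_+]=\mathbb E[Y_-]=\infty$, then both $Y\le^\dagger_{\rm cx}X$ and $X\le_{\rm cx}Y$ hold.
   Context: $x_+=\max\{x,0\}$, $x_-=\max\{-x,0\}$. An expectation $\mathbb E[Z]$ is well-defined if $\mathbb E[Z_+]<\infty$ or $\mathbb E[Z_-]<\infty$. $\mathcal U_{\rm cx}$ (resp. $\mathcal U_{\rm icx}$, $\mathcal U_{\rm dcx}$) denotes the set of convex (resp. increasing convex, decreasing convex) functions $\mathbb R\to\mathbb R$. For $*\in\{\rm cx,icx,dcx\}$, $X\le_*Y$ means $\mathbb E[u(X)]\le\mathbb E[u(Y)]$ for all $u\in\mathcal U_*$ such that both expectations are well-defined. $X\le^\dagger_{\rm cx}Y$ means $\mathbb E[u(X)]\le\mathbb E[u(Y)]$ for all $u\in\mathcal U_{\rm cx}$ such that both expectations are finite. *)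

theory Defs
  imports "HOL-Probability.Probability"
begin

definition pos_exp :: "'a measure \<Rightarrow> ('a \<Rightarrow> real) \<Rightarrow> ennreal" where
  "pos_exp M Z = (\<integral>\<^sup>+ x. ennreal (max (Z x) 0) \<partial>M)"

definition neg_exp :: "'a measure \<Rightarrow> ('a \<Rightarrow> real) \<Rightarrow> ennreal" where
  "neg_exp M Z = (\<integral>\<^sup>+ x. ennreal (max (- Z x) 0) \<partial>M)"

definition exp_well_defined :: "'a measure \<Rightarrow> ('a \<Rightarrow> real) \<Rightarrow> bool" where
  "exp_well_defined M Z \<longleftrightarrow> pos_exp M Z < \<infinity> \<or> neg_exp M Z < \<infinity>"

definition exp_finite :: "'a measure \<Rightarrow> ('a \<Rightarrow> real) \<Rightarrow> bool" where
  "exp_finite M Z \<longleftrightarrow> pos_exp M Z < \<infinity> \<and> neg_exp M Z < \<infinity>"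

text \<open>The (extended-real) expectation E[Z] = E[Z_+] - E[Z_-]; meaningful when well-defined.\<close>
definition ext_exp :: "'a measure \<Rightarrow> ('a \<Rightarrow> real) \<Rightarrow> ereal" where
  "ext_exp M Z = enn2ereal (pos_exp M Z) - enn2ereal (neg_exp M Z)"

definition U_cx :: "(real \<Rightarrow> real) set" where
  "U_cx = {u. convex_on UNIV u}"

definition U_icx :: "(real \<Rightarrow> real) set" where
  "U_icx = {u. convex_on UNIV u \<and> mono u}"

definition U_dcx :: "(real \<Rightarrow> real) set" where
  "U_dcx = {u. convex_on UNIV u \<and> antimono u}"

definition stoch_le :: "'a measure \<Rightarrow> (real \<Rightarrow> real) set \<Rightarrow> ('a \<Rightarrow> real) \<Rightarrow> ('a \<Rightarrow> real) \<Rightarrow> bool" where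
  "stoch_le M U X Y \<longleftrightarrow> (\<forall>u\<in>U. exp_well_defined M (u \<circ> X) \<and> exp_well_defined M (u \<circ> Y)
      \<longrightarrow> ext_exp M (u \<circ> X) \<le> ext_exp M (u \<circ> Y))"

definition cx_le_dagger :: "'a measure \<Rightarrow> ('a \<Rightarrow> real) \<Rightarrow> ('a \<Rightarrow> real) \<Rightarrow> bool" where
  "cx_le_dagger M X Y \<longleftrightarrow> (\<forall>u\<in>U_cx. exp_finite M (u \<circ> X) \<and> exp_finite M (u \<circ> Y)
      \<longrightarrow> ext_exp M (u \<circ> X) \<le> ext_exp M (u \<circ> Y))"

definition atomless :: "'a measure \<Rightarrow> bool" where
  "atomless M \<longleftrightarrow> (\<forall>A\<in>sets M. 0 < measure M A \<longrightarrow>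
      (\<exists>B\<in>sets M. B \<subseteq> A \<and> 0 < measure M B \<and> measure M B < measure M A))"

end

theory Submission
  imports Defs
begin

text \<open>A convex function that is not decreasing grows at least linearly at \<open>+\<infinity>\<close>, so
  \<open>E[Y\<^sub>+] = \<infinity>\<close> forces \<open>E[u(Y)\<^sub>+] = \<infinity>\<close>; reflecting \<open>y \<mapsto> -y\<close>, the same holds for convex
  functions that are not increasing when \<open>E[Y\<^sub>-] = \<infinity>\<close>. Whenever \<open>E[u(Y)]\<close> is well-defined
  it is then \<open>+\<infinity>\<close>, so the comparison \<open>E[u(X)] \<le> E[u(Y)]\<close> is automatic for such \<open>u\<close>, and
  \<open>E[u(Y)]\<close> is never finite. Only the decreasing (resp. increasing, resp. constant)
  convex functions remain to be checked.\<close>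

lemma convex_on_not_antimono_pos_part_bound:
  fixes u :: "real \<Rightarrow> real"
  assumes cv: "convex_on UNIV u" and not_antimono: "\<not> antimono u"
  obtains a c where "a > 0" "c \<ge> 0" "\<And>y. a * max y 0 \<le> max (u y) 0 + c"
proof -
  from not_antimono obtain s t where "s \<le> t" "u s < u t"
    unfolding antimono_def by force
  then have "s < t" by (cases "s = t") auto
  define a where "a = (u t - u s) / (t - s)"
  have "a > 0" using \<open>s < t\<close> \<open>u s < u t\<close> by (simp add: a_def)
  have minorant: "u s + a * (y - s) \<le> u y" if "t < y" for y
  proof -
    have "(u s - u t) / (s - t) \<le> (u s - u y) / (s - y)"
      using convex_on_slope_le(1)[OF cv _ _ \<open>s < t\<close> that] by simp
    then have "a \<le> (u y - u s) / (y - s)"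
      unfolding a_def by (metis minus_diff_eq minus_divide_divide)
    then show ?thesis using \<open>s < t\<close> that by (simp add: pos_le_divide_eq algebra_simps)
  qed
  define c where "c = \<bar>u s - a * s\<bar> + a * \<bar>t\<bar>"
  have "0 \<le> a * \<bar>t\<bar>" using \<open>a > 0\<close> by simp
  then have "c \<ge> 0" by (simp add: c_def)
  have "a * max y 0 \<le> max (u y) 0 + c" for y
  proof -
    have "a * y \<le> max (u y) 0 + c"
    proof (cases "t < y")
      case True
      then have "a * y \<le> u y - (u s - a * s)" using minorant[OF True] by (simp add: algebra_simps)
      then show ?thesis
        using abs_ge_self[of "u s - a * s"] max.cobounded1[of "u y" 0] \<open>0 \<le> a * \<bar>t\<bar>\<close>
        unfolding c_def by linarith
    next
      case False
      then have "a * y \<le> a * \<bar>t\<bar>" using \<open>a > 0\<close> by simp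
      then show ?thesis using max.cobounded2[of 0 "u y"] unfolding c_def by linarith
    qed
    then show ?thesis using \<open>a > 0\<close> \<open>c \<ge> 0\<close> by (simp add: max_mult_distrib_left)
  qed
  then show ?thesis using that \<open>a > 0\<close> \<open>c \<ge> 0\<close> by blast
qed

lemma borel_measurable_convex_comp:
  fixes u :: "real \<Rightarrow> real"
  assumes "convex_on UNIV u" "Z \<in> borel_measurable M"
  shows "u \<circ> Z \<in> borel_measurable M"
proof -
  have "u \<in> borel_measurable borel"
    using convex_on_continuous[OF open_UNIV assms(1)] by (rule borel_measurable_continuous_onI)
  then show ?thesis using assms(2) by (simp add: measurable_comp comp_def)
qed

lemma neg_exp_eq_pos_exp_uminus: "neg_exp M Z = pos_exp M (\<lambda>x. - Z x)"
  by (simp add: neg_exp_def pos_exp_def)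

lemma pos_exp_convex_comp_eq_top:
  fixes u :: "real \<Rightarrow> real"
  assumes "prob_space M" and Z: "Z \<in> borel_measurable M" and Z_top: "pos_exp M Z = \<infinity>"
    and cv: "convex_on UNIV u" and "\<not> antimono u"
  shows "pos_exp M (u \<circ> Z) = \<infinity>"
proof -
  interpret prob_space M by fact
  obtain a c where "a > 0" "c \<ge> 0" and bound: "\<And>y. a * max y 0 \<le> max (u y) 0 + c"
    using convex_on_not_antimono_pos_part_bound[OF cv \<open>\<not> antimono u\<close>] by blast
  have "\<infinity> = ennreal a * pos_exp M Z"
    using Z_top \<open>a > 0\<close> by (simp add: ennreal_mult_top)
  also have "\<dots> = (\<integral>\<^sup>+ x. ennreal (a * max (Z x) 0) \<partial>M)"
    using \<open>a > 0\<close> Z unfolding pos_exp_def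
    by (subst nn_integral_cmult[symmetric]) (auto simp: ennreal_mult)
  also have "\<dots> \<le> (\<integral>\<^sup>+ x. ennreal (max (u (Z x)) 0) + ennreal c \<partial>M)"
  proof (rule nn_integral_mono)
    fix x
    have "ennreal (a * max (Z x) 0) \<le> ennreal (max (u (Z x)) 0 + c)"
      using bound by (rule ennreal_leI)
    then show "ennreal (a * max (Z x) 0) \<le> ennreal (max (u (Z x)) 0) + ennreal c"
      using \<open>c \<ge> 0\<close> by (simp add: ennreal_plus)
  qed
  also have "\<dots> = pos_exp M (u \<circ> Z) + ennreal c"
    using borel_measurable_convex_comp[OF cv Z]
    by (subst nn_integral_add) (auto simp: pos_exp_def emeasure_space_1 comp_def)
  finally show ?thesis by (simp add: top_unique)
qed

lemma convex_on_reflect: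
  fixes u :: "real \<Rightarrow> real"
  assumes "convex_on UNIV u"
  shows "convex_on UNIV (\<lambda>y. u (- y))"
proof (rule convex_onI)
  fix t x y :: real assume "0 < t" "t < 1"
  then have "u ((1 - t) *\<^sub>R (- x) + t *\<^sub>R (- y)) \<le> (1 - t) * u (- x) + t * u (- y)"
    by (intro convex_onD[OF assms]) auto
  then show "u (- ((1 - t) *\<^sub>R x + t *\<^sub>R y)) \<le> (1 - t) * u (- x) + t * u (- y)"
    by (simp add: algebra_simps)
qed simp

lemma pos_exp_convex_comp_eq_top_of_neg_exp:
  fixes u :: "real \<Rightarrow> real"
  assumes "prob_space M" and Z: "Z \<in> borel_measurable M" and "neg_exp M Z = \<infinity>"
    and cv: "convex_on UNIV u" and not_mono: "\<not> mono u"
  shows "pos_exp M (u \<circ> Z) = \<infinity>"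
proof -
  have "convex_on UNIV (\<lambda>y. u (- y))"
    using cv by (rule convex_on_reflect)
  moreover have "\<not> antimono (\<lambda>y. u (- y))"
    using not_mono unfolding mono_def antimono_def by (metis minus_minus neg_le_iff_le)
  ultimately have "pos_exp M ((\<lambda>y. u (- y)) \<circ> (\<lambda>x. - Z x)) = \<infinity>"
    using assms(1-3) by (intro pos_exp_convex_comp_eq_top) (auto simp: neg_exp_eq_pos_exp_uminus)
  then show ?thesis by (simp add: comp_def)
qed

lemma ext_exp_eq_top:
  assumes "exp_well_defined M Z" and "pos_exp M Z = \<infinity>"
  shows "ext_exp M Z = \<infinity>"
  using assms by (cases "neg_exp M Z") (auto simp: exp_well_defined_def ext_exp_def)

lemma mono_antimono_imp_const:
  fixes u :: "'a::linorder \<Rightarrow> 'b::order"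
  assumes "mono u" "antimono u"
  shows "u x = u y"
  using monoD[OF assms(1)] antimonoD[OF assms(2)] by (metis order.antisym le_cases)

lemma ext_exp_comp_eq_if_mono_antimono:
  fixes u :: "'a::linorder \<Rightarrow> real"
  assumes "mono u" "antimono u"
  shows "ext_exp M (u \<circ> X) = ext_exp M (u \<circ> Y)"
proof -
  have "u \<circ> X = u \<circ> Y"
    unfolding comp_def using assms by (intro ext mono_antimono_imp_const[of u])
  then show ?thesis by simp
qed

lemma stoch_le_iff_stoch_le_subset:
  assumes "U' \<subseteq> U" and "\<And>u. u \<in> U - U' \<Longrightarrow> pos_exp M (u \<circ> Y) = \<infinity>"
  shows "stoch_le M U X Y \<longleftrightarrow> stoch_le M U' X Y"
  using assms ext_exp_eq_top unfolding stoch_le_def by (metis DiffI ereal_less_eq(1) subsetD)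

theorem lemma1:
  fixes M :: "'a measure" and X Y :: "'a \<Rightarrow> real"
  assumes "prob_space M" and "atomless M"
    and "X \<in> borel_measurable M" and "Y \<in> borel_measurable M"
  shows "(pos_exp M Y = \<infinity> \<longrightarrow> (stoch_le M U_cx X Y \<longleftrightarrow> stoch_le M U_dcx X Y))
       \<and> (neg_exp M Y = \<infinity> \<longrightarrow> (stoch_le M U_cx X Y \<longleftrightarrow> stoch_le M U_icx X Y))
       \<and> (pos_exp M Y = \<infinity> \<and> neg_exp M Y = \<infinity> \<longrightarrow> cx_le_dagger M Y X \<and> stoch_le M U_cx X Y)"
proof -
  note prob = assms(1) and Y = assms(4)
  have top_if_not_antimono: "pos_exp M (u \<circ> Y) = \<infinity>"
    if "pos_exp M Y = \<infinity>" "u \<in> U_cx - U_dcx" for u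
    using that pos_exp_convex_comp_eq_top[OF prob Y] by (auto simp: U_cx_def U_dcx_def)
  have top_if_not_mono: "pos_exp M (u \<circ> Y) = \<infinity>"
    if "neg_exp M Y = \<infinity>" "u \<in> U_cx - U_icx" for u
    using that pos_exp_convex_comp_eq_top_of_neg_exp[OF prob Y] by (auto simp: U_cx_def U_icx_def)
  have const: "ext_exp M (u \<circ> X) = ext_exp M (u \<circ> Y)" if "u \<in> U_icx \<inter> U_dcx" for u
    using that by (intro ext_exp_comp_eq_if_mono_antimono) (auto simp: U_icx_def U_dcx_def)
  show ?thesis
  proof (intro conjI impI)
    show "stoch_le M U_cx X Y \<longleftrightarrow> stoch_le M U_dcx X Y" if "pos_exp M Y = \<infinity>"
      using that top_if_not_antimono by (intro stoch_le_iff_stoch_le_subset) (auto simp: U_cx_def U_dcx_def)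
    show "stoch_le M U_cx X Y \<longleftrightarrow> stoch_le M U_icx X Y" if "neg_exp M Y = \<infinity>"
      using that top_if_not_mono by (intro stoch_le_iff_stoch_le_subset) (auto simp: U_cx_def U_icx_def)
  next
    assume both: "pos_exp M Y = \<infinity> \<and> neg_exp M Y = \<infinity>"
    have top_if_not_const: "pos_exp M (u \<circ> Y) = \<infinity>" if "u \<in> U_cx - U_icx \<inter> U_dcx" for u
      using that both top_if_not_antimono top_if_not_mono by blast
    show "cx_le_dagger M Y X"
      unfolding cx_le_dagger_def
    proof (intro ballI impI)
      fix u assume "u \<in> U_cx" and "exp_finite M (u \<circ> Y) \<and> exp_finite M (u \<circ> X)"
      then have "u \<in> U_icx \<inter> U_dcx" using top_if_not_const unfolding exp_finite_def by force
      then show "ext_exp M (u \<circ> Y) \<le> ext_exp M (u \<circ> X)" using const by simp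
    qed
    have "U_icx \<inter> U_dcx \<subseteq> U_cx" by (auto simp: U_cx_def U_icx_def)
    then have "stoch_le M U_cx X Y \<longleftrightarrow> stoch_le M (U_icx \<inter> U_dcx) X Y"
      using top_if_not_const by (rule stoch_le_iff_stoch_le_subset)
    then show "stoch_le M U_cx X Y"
      using const by (simp add: stoch_le_def)
  qed
qed

end
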